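(* Let $\mathbf{B}\in\dot{\mathbb{P}}(\mathbb{L}(\mathbf{C}))$ with $|\mathbf{B}|=|\mathbf{C}|$. Then $\mathbf{B}$ is a minimal sufficient cause for $D$ relative to $\mathbf{C}$ for some individual $\omega^*\in\Omega$ if and only if $\mathbf{B}$ is irreducible for $\mathcal{D}(\mathbf{C},\Omega)$.
   Context: An event is a binary random variable on a population $\Omega$; $\overline{X}=1-X$; $\mathbb{L}(\mathbf{C})=\mathbf{C}\cup\{\overline{X}:X\in\mathbf{C}\}$; $\dot{\mathbb{P}}(\mathbb{L}(\mathbf{C}))$ is the set of subsets of $\mathbb{L}(\mathbf{C})$ not containing both $X$ and $\overline{X}$ for any $X$; $(L)_{\mathbf{c}}$ is the value of literal $L$ under assignment $\mathbf{c}$ to $\mathbf{C}$; $\bigwedge(\mathbf{B})=\min_{L\in\mathbf{B}}L$. Potential outcomes $\mathcal{D}(\mathbf{C},\Omega)$: values $D_{\mathbf{c}}(\omega)\in\{0,1\}$ for all $\omega\in\Omega$ and assignments $\mathbf{c}$. A set $\mathbf{B}\subseteq\mathbb{L}(\mathbf{C})$ is a sufficient cause for $D$ relative to $\mathbf{C}$ in a nonempty $\Omega^*\subseteq\Omega$ if there exists $\mathbf{c}^*$ with $(\bigwedge(\mathbf{B}))_{\mathbf{c}^*}=1$ and for all $\mathbf{c}$ with $(\bigwedge(\mathbf{B}))_{\mathbf{c}}=1$ one has $D_{\mathbf{c}}(\omega)=1$ for all $\omega\in\Omega^*$; it is a minimal sufficient cause if in addition no proper subset of $\mathbf{B}$ is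 a sufficient cause for $D$ in $\Omega^*$. "For $\omega^*$" means $\Omega^*=\{\omega^*\}$. A sufficient cause representation $(\mathbf{A},\mathfrak{B})$ for $\mathcal{D}(\mathbf{C},\Omega)$ is a tuple $\mathbf{A}=\langle A_1,\dots,A_p\rangle$ of binary random variables on $\Omega$ unaffected by interventions on $\mathbf{C}$ and a tuple $\mathfrak{B}=\langle\mathbf{B}_1,\dots,\mathbf{B}_p\rangle$, $\mathbf{B}_i\in\dot{\mathbb{P}}(\mathbb{L}(\mathbf{C}))$, such that for all $\omega,\mathbf{c}$: $D_{\mathbf{c}}(\omega)=1$ iff some $j$ has $A_j(\omega)=1$ and $(\bigwedge(\mathbf{B}_j))_{\mathbf{c}}=1$. $\mathbf{B}\in\dot{\mathbb{P}}(\mathbb{L}(\mathbf{C}))$ is irreducible for $\mathcal{D}(\mathbf{C},\Omega)$ if in every such representation some $\mathbf{B}_i\in\mathfrak{B}$ satisfies $\mathbf{B}\subseteq\mathbf{B}_i$. *)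

theory Defs
  imports "HOL-Library.FuncSet"
begin

text \<open>Literals over variables of type 'v: (X, True) stands for X, (X, False) for its
complement 1 - X.  Truth values 0/1 are rendered as False/True.\<close>

type_synonym 'v literal = "'v \<times> bool"

definition lits :: "'v set \<Rightarrow> 'v literal set" where
  "lits C = C \<times> (UNIV :: bool set)"

definition Pdot :: "'v set \<Rightarrow> 'v literal set set" where
  "Pdot C = {B. B \<subseteq> lits C \<and> (\<forall>X. \<not> ((X, True) \<in> B \<and> (X, False) \<in> B))}"

definition assignments :: "'v set \<Rightarrow> ('v \<Rightarrow> bool) set" where
  "assignments C = C \<rightarrow>\<^sub>E (UNIV :: bool set)"

definition lit_val :: "'v literal \<Rightarrow> ('v \<Rightarrow> bool) \<Rightarrow> bool" where
  "lit_val L c = (c (fst L) = snd L)"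

definition conj_val :: "'v literal set \<Rightarrow> ('v \<Rightarrow> bool) \<Rightarrow> bool" where
  "conj_val B c = (\<forall>L\<in>B. lit_val L c)"

text \<open>Potential outcomes: D c \<omega> is D_c(\<omega>).\<close>
definition sufficient_cause ::
  "'v set \<Rightarrow> (('v \<Rightarrow> bool) \<Rightarrow> 'w \<Rightarrow> bool) \<Rightarrow> 'w set \<Rightarrow> 'v literal set \<Rightarrow> bool" where
  "sufficient_cause C D \<Omega>s B \<longleftrightarrow>
     \<Omega>s \<noteq> {} \<and>
     (\<exists>c\<in>assignments C. conj_val B c) \<and>
     (\<forall>c\<in>assignments C. conj_val B c \<longrightarrow> (\<forall>\<omega>\<in>\<Omega>s. D c \<omega>))"

definition minimal_sufficient_cause ::
  "'v set \<Rightarrow> (('v \<Rightarrow> bool) \<Rightarrow> 'w \<Rightarrow> bool) \<Rightarrow> 'w set \<Rightarrow> 'v literal set \<Rightarrow> bool" where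
  "minimal_sufficient_cause C D \<Omega>s B \<longleftrightarrow>
     sufficient_cause C D \<Omega>s B \<and> (\<forall>B'. B' \<subset> B \<longrightarrow> \<not> sufficient_cause C D \<Omega>s B')"

text \<open>A sufficient cause representation: a list of pairs (A_j, B_j), with A_j a binary
random variable on \<Omega> (not depending on the assignment) and B_j \<in> Pdot C.\<close>
definition sc_representation ::
  "'v set \<Rightarrow> 'w set \<Rightarrow> (('v \<Rightarrow> bool) \<Rightarrow> 'w \<Rightarrow> bool) \<Rightarrow>
   (('w \<Rightarrow> bool) \<times> 'v literal set) list \<Rightarrow> bool" where
  "sc_representation C \<Omega> D R \<longleftrightarrow>
     (\<forall>j<length R. snd (R ! j) \<in> Pdot C) \<and>
     (\<forall>\<omega>\<in>\<Omega>. \<forall>c\<in>assignments C.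
        D c \<omega> \<longleftrightarrow> (\<exists>j<length R. fst (R ! j) \<omega> \<and> conj_val (snd (R ! j)) c))"

definition irreducible ::
  "'v set \<Rightarrow> 'w set \<Rightarrow> (('v \<Rightarrow> bool) \<Rightarrow> 'w \<Rightarrow> bool) \<Rightarrow> 'v literal set \<Rightarrow> bool" where
  "irreducible C \<Omega> D B \<longleftrightarrow>
     (\<forall>R. sc_representation C \<Omega> D R \<longrightarrow> (\<exists>j<length R. B \<subseteq> snd (R ! j)))"

end

theory Submission
  imports Defs
begin

text \<open>Since B is consistent and has one literal per variable of C, it is the complete
conjunction of a single assignment c. If B is minimal sufficient for some individual \<omega>,
then D_c(\<omega>) = 1, so every representation has a term B_j satisfied by c with A_j(\<omega>) = 1;
such a B_j is contained in B and is itself sufficient for \<omega>, so minimality gives B_j = B.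
Conversely, if B is minimal sufficient for nobody, then for every \<omega> with D_c(\<omega>) = 1 some
proper subset of B is sufficient for \<omega>. Hence D is represented by the complete conjunctions
of all other assignments together with all proper subsets B' of B, the latter weighted by
the indicator of "B' is sufficient for \<omega>"; no term of this representation contains B.\<close>

definition assignment_literals :: "'v set \<Rightarrow> ('v \<Rightarrow> bool) \<Rightarrow> 'v literal set" where
  "assignment_literals C c = (\<lambda>X. (X, c X)) ` C"

lemma Pdot_subset: "B' \<subseteq> B \<Longrightarrow> B \<in> Pdot C \<Longrightarrow> B' \<in> Pdot C"
  by (auto simp: Pdot_def)

lemma finite_Pdot: "finite C \<Longrightarrow> B \<in> Pdot C \<Longrightarrow> finite B"
  unfolding Pdot_def lits_def by (auto intro: finite_subset)

lemma assignment_literals_Pdot: "assignment_literals C c \<in> Pdot C"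
  by (auto simp: assignment_literals_def Pdot_def lits_def)

lemma conj_val_assignment_literals_iff:
  assumes "c \<in> assignments C" "c' \<in> assignments C"
  shows "conj_val (assignment_literals C c) c' \<longleftrightarrow> c' = c"
proof
  assume sat: "conj_val (assignment_literals C c) c'"
  show "c' = c"
  proof
    fix X show "c' X = c X"
    proof (cases "X \<in> C")
      case True
      then show ?thesis using sat by (auto simp: conj_val_def assignment_literals_def lit_val_def)
    next
      case False
      then show ?thesis using assms by (auto simp: assignments_def PiE_def extensional_def)
    qed
  qed
qed (auto simp: conj_val_def assignment_literals_def lit_val_def)

lemma Pdot_conj_val_subset_assignment_literals:
  assumes "B \<in> Pdot C" "conj_val B c"
  shows "B \<subseteq> assignment_literals C c"
proof
  fix L assume L: "L \<in> B"
  then have "fst L \<in> C" using assms(1) by (auto simp: Pdot_def lits_def)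
  moreover have "c (fst L) = snd L" using assms(2) L by (auto simp: conj_val_def lit_val_def)
  ultimately have "L = (fst L, c (fst L))" "fst L \<in> C" by auto
  then show "L \<in> assignment_literals C c" unfolding assignment_literals_def by (rule image_eqI)
qed

lemma card_eq_subset_assignment_literals:
  assumes "finite C" "card B = card C" "B \<subseteq> assignment_literals C c"
  shows "B = assignment_literals C c"
proof -
  have "card (assignment_literals C c) \<le> card C"
    unfolding assignment_literals_def using assms(1) by (rule card_image_le)
  then have "card (assignment_literals C c) \<le> card B" using assms(2) by simp
  moreover have "finite (assignment_literals C c)"
    using assms(1) by (simp add: assignment_literals_def)
  ultimately show ?thesis using card_seteq assms(3) by blast
qed

definition represents ::
  "'v set \<Rightarrow> 'w set \<Rightarrow> (('v \<Rightarrow> bool) \<Rightarrow> 'w \<Rightarrow> bool) \<Rightarrow>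
   (('w \<Rightarrow> bool) \<times> 'v literal set) set \<Rightarrow> bool" where
  "represents C \<Omega> D S \<longleftrightarrow>
     (\<forall>p\<in>S. snd p \<in> Pdot C) \<and>
     (\<forall>\<omega>\<in>\<Omega>. \<forall>c\<in>assignments C. D c \<omega> \<longleftrightarrow> (\<exists>p\<in>S. fst p \<omega> \<and> conj_val (snd p) c))"

lemma sc_representation_iff_represents:
  "sc_representation C \<Omega> D R \<longleftrightarrow> represents C \<Omega> D (set R)"
proof -
  have "(\<exists>p\<in>set R. P p) \<longleftrightarrow> (\<exists>j<length R. P (R ! j))" for P
    by (metis in_set_conv_nth)
  then show ?thesis
    unfolding sc_representation_def represents_def by (simp add: all_set_conv_all_nth)
qed

lemma irreducible_iff_represents:
  "irreducible C \<Omega> D B \<longleftrightarrow>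
     (\<forall>S. finite S \<and> represents C \<Omega> D S \<longrightarrow> (\<exists>p\<in>S. B \<subseteq> snd p))"
proof -
  have ex_iff: "(\<exists>p\<in>set R. B \<subseteq> snd p) \<longleftrightarrow> (\<exists>j<length R. B \<subseteq> snd (R ! j))" for R
    by (metis in_set_conv_nth)
  have "irreducible C \<Omega> D B \<longleftrightarrow>
      (\<forall>R. represents C \<Omega> D (set R) \<longrightarrow> (\<exists>p\<in>set R. B \<subseteq> snd p))"
    unfolding irreducible_def sc_representation_iff_represents ex_iff ..
  also have "\<dots> \<longleftrightarrow> (\<forall>S. finite S \<and> represents C \<Omega> D S \<longrightarrow> (\<exists>p\<in>S. B \<subseteq> snd p))"
    by (metis finite_list finite_set)
  finally show ?thesis .
qed

definition sufficient_at ::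
  "'v set \<Rightarrow> (('v \<Rightarrow> bool) \<Rightarrow> 'w \<Rightarrow> bool) \<Rightarrow> 'v literal set \<Rightarrow> 'w \<Rightarrow> bool" where
  "sufficient_at C D B \<omega> \<longleftrightarrow> (\<forall>c\<in>assignments C. conj_val B c \<longrightarrow> D c \<omega>)"

lemma sufficient_cause_singleton_iff:
  "sufficient_cause C D {\<omega>} B \<longleftrightarrow> (\<exists>c\<in>assignments C. conj_val B c) \<and> sufficient_at C D B \<omega>"
  by (auto simp: sufficient_cause_def sufficient_at_def)

lemma represents_term_sufficient_cause:
  assumes "represents C \<Omega> D S" "p \<in> S" "\<omega> \<in> \<Omega>" "fst p \<omega>"
    and "c \<in> assignments C" "conj_val (snd p) c"
  shows "sufficient_cause C D {\<omega>} (snd p)"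
  using assms by (auto simp: sufficient_cause_singleton_iff sufficient_at_def represents_def)

lemma minimal_sufficient_cause_imp_irreducible:
  assumes "finite C" "B \<in> Pdot C" "card B = card C"
    and "\<omega> \<in> \<Omega>" and min: "minimal_sufficient_cause C D {\<omega>} B"
  shows "irreducible C \<Omega> D B"
  unfolding irreducible_iff_represents
proof (intro allI impI)
  fix S assume S: "finite S \<and> represents C \<Omega> D S"
  have "sufficient_cause C D {\<omega>} B"
    using min by (simp add: minimal_sufficient_cause_def)
  then obtain c where c: "c \<in> assignments C" "conj_val B c" and "D c \<omega>"
    unfolding sufficient_cause_singleton_iff sufficient_at_def by blast
  then obtain p where p: "p \<in> S" "fst p \<omega>" "conj_val (snd p) c"
    using S \<open>\<omega> \<in> \<Omega>\<close> unfolding represents_def by blast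
  have B_eq: "B = assignment_literals C c"
    using card_eq_subset_assignment_literals[OF assms(1,3)]
      Pdot_conj_val_subset_assignment_literals[OF assms(2) c(2)] by simp
  have "snd p \<in> Pdot C" using S p(1) by (simp add: represents_def)
  then have "snd p \<subseteq> B"
    using B_eq p(3) Pdot_conj_val_subset_assignment_literals by simp
  moreover have "sufficient_cause C D {\<omega>} (snd p)"
    using S p c(1) \<open>\<omega> \<in> \<Omega>\<close> by (intro represents_term_sufficient_cause) auto
  moreover have "\<not> sufficient_cause C D {\<omega>} B'" if "B' \<subset> B" for B'
    using min that by (simp add: minimal_sufficient_cause_def)
  ultimately have "snd p = B" by blast
  then show "\<exists>p\<in>S. B \<subseteq> snd p" using p(1) by auto
qed

definition avoiding_representation ::
  "'v set \<Rightarrow> (('v \<Rightarrow> bool) \<Rightarrow> 'w \<Rightarrow> bool) \<Rightarrow> 'v literal set \<Rightarrow>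
   (('w \<Rightarrow> bool) \<times> 'v literal set) set" where
  "avoiding_representation C D B =
     (\<lambda>c. (D c, assignment_literals C c)) ` {c \<in> assignments C. assignment_literals C c \<noteq> B} \<union>
     (\<lambda>B'. (sufficient_at C D B', B')) ` {B'. B' \<subset> B}"

lemma finite_avoiding_representation:
  assumes "finite C" "finite B"
  shows "finite (avoiding_representation C D B)"
proof -
  have "finite (assignments C)" using assms(1) by (simp add: assignments_def finite_PiE)
  moreover have "finite {B'. B' \<subset> B}" using assms(2) by (auto intro: finite_subset[of _ "Pow B"])
  ultimately show ?thesis by (simp add: avoiding_representation_def)
qed

lemma avoiding_representation_avoids:
  assumes "finite C" "card B = card C" "p \<in> avoiding_representation C D B"
  shows "\<not> B \<subseteq> snd p"
  using assms(3) unfolding avoiding_representation_def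
proof (elim UnE imageE)
  fix c assume "p = (D c, assignment_literals C c)"
    and "c \<in> {c \<in> assignments C. assignment_literals C c \<noteq> B}"
  then show ?thesis using card_eq_subset_assignment_literals[OF assms(1,2)] by auto
qed auto

lemma represents_avoiding_representation:
  assumes "B \<in> Pdot C" and not_min: "\<forall>\<omega>\<in>\<Omega>. \<not> minimal_sufficient_cause C D {\<omega>} B"
  shows "represents C \<Omega> D (avoiding_representation C D B)"
  unfolding represents_def
proof (intro conjI ballI)
  fix p assume "p \<in> avoiding_representation C D B"
  then show "snd p \<in> Pdot C"
    unfolding avoiding_representation_def
  proof (elim UnE imageE)
    fix B' assume "p = (sufficient_at C D B', B')" "B' \<in> {B'. B' \<subset> B}"
    then show ?thesis using Pdot_subset assms(1) by auto
  qed (simp add: assignment_literals_Pdot)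
next
  fix \<omega> c assume \<omega>: "\<omega> \<in> \<Omega>" and c: "c \<in> assignments C"
  let ?S = "avoiding_representation C D B"
  have sat_iff: "conj_val (assignment_literals C c') c \<longleftrightarrow> c = c'" if "c' \<in> assignments C" for c'
    using conj_val_assignment_literals_iff that c by blast
  show "D c \<omega> \<longleftrightarrow> (\<exists>p\<in>?S. fst p \<omega> \<and> conj_val (snd p) c)"
  proof
    assume Dc: "D c \<omega>"
    show "\<exists>p\<in>?S. fst p \<omega> \<and> conj_val (snd p) c"
    proof (cases "assignment_literals C c = B")
      case False
      then have "(D c, assignment_literals C c) \<in> ?S"
        using c by (auto simp: avoiding_representation_def)
      then show ?thesis using Dc sat_iff[OF c] by (intro bexI) auto
    next
      case True
      then have "sufficient_cause C D {\<omega>} B"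
        using c Dc conj_val_assignment_literals_iff[OF c]
        by (auto simp: sufficient_cause_singleton_iff sufficient_at_def)
      moreover have "\<not> minimal_sufficient_cause C D {\<omega>} B" using not_min \<omega> by blast
      ultimately obtain B' where B': "B' \<subset> B" "sufficient_cause C D {\<omega>} B'"
        unfolding minimal_sufficient_cause_def by blast
      have "(sufficient_at C D B', B') \<in> ?S"
        using B'(1) by (simp add: avoiding_representation_def)
      moreover have "sufficient_at C D B' \<omega>"
        using B'(2) by (simp add: sufficient_cause_singleton_iff)
      moreover have "conj_val B' c"
        using B'(1) True sat_iff[OF c] by (auto simp: conj_val_def)
      ultimately show ?thesis by (intro bexI) auto
    qed
  next
    assume "\<exists>p\<in>?S. fst p \<omega> \<and> conj_val (snd p) c"
    then obtain p where "p \<in> ?S" "fst p \<omega>" "conj_val (snd p) c" by blast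
    then show "D c \<omega>"
      unfolding avoiding_representation_def
    proof (elim UnE imageE)
      fix c' assume "p = (D c', assignment_literals C c')"
        and "c' \<in> {c \<in> assignments C. assignment_literals C c \<noteq> B}"
      then show ?thesis using \<open>fst p \<omega>\<close> \<open>conj_val (snd p) c\<close> sat_iff by auto
    qed (use c in \<open>auto simp: sufficient_at_def\<close>)
  qed
qed

theorem mainTheorem3:
  fixes C :: "'v set" and \<Omega> :: "'w set" and D :: "('v \<Rightarrow> bool) \<Rightarrow> 'w \<Rightarrow> bool"
    and B :: "'v literal set"
  assumes "finite C"
    and "B \<in> Pdot C"
    and "card B = card C"
  shows "(\<exists>\<omega>\<in>\<Omega>. minimal_sufficient_cause C D {\<omega>} B) \<longleftrightarrow> irreducible C \<Omega> D B"
proof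
  assume "\<exists>\<omega>\<in>\<Omega>. minimal_sufficient_cause C D {\<omega>} B"
  then obtain \<omega> where "\<omega> \<in> \<Omega>" "minimal_sufficient_cause C D {\<omega>} B" ..
  then show "irreducible C \<Omega> D B"
    by (rule minimal_sufficient_cause_imp_irreducible[OF assms])
next
  assume irr: "irreducible C \<Omega> D B"
  show "\<exists>\<omega>\<in>\<Omega>. minimal_sufficient_cause C D {\<omega>} B"
  proof (rule ccontr)
    let ?S = "avoiding_representation C D B"
    assume "\<not> (\<exists>\<omega>\<in>\<Omega>. minimal_sufficient_cause C D {\<omega>} B)"
    then have "represents C \<Omega> D ?S"
      using assms(2) by (intro represents_avoiding_representation) auto
    moreover have "finite ?S"
      using assms(1,2) finite_Pdot by (intro finite_avoiding_representation)
    ultimately obtain p where "p \<in> ?S" "B \<subseteq> snd p"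
      using irr unfolding irreducible_iff_represents by blast
    then show False using avoiding_representation_avoids[OF assms(1,3)] by blast
  qed
qed

end
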